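(* Over a field of characteristic $0$, write $[a,b]=ab-ba$ and $\{a,b\}=ab+ba$. An algebra is left-symmetric and satisfies $a(bc)+b(ac)+a(cb)+c(ab)+b(ca)+c(ba)=0$ if and only if, in terms of $[\cdot,\cdot]$ and $\{\cdot,\cdot\}$, it satisfies \[ [[a,b],c]+[[b,c],a]+[[c,a],b]=0, \] \[ \{\{a,b\},c\}=-\{[a,b],c\}-2\{[a,c],b\}+[\{a,b\},c]-[[a,c],b]+\{a,\{b,c\}\}-\{a,[b,c]\}+[a,\{b,c\}], \] and \[ \{a,\{b,c\}\}=\{[a,b],c\}+\{[a,c],b\}+[\{b,c\},a]+\tfrac23[[a,c],b]+\tfrac13[a,[b,c]]. \]
   Context: A left-symmetric algebra is an algebra whose associator $(a,b,c)=(ab)c-a(bc)$ satisfies $(a,b,c)=(b,a,c)$. The statement is the polarization (Markl–Remm) of this variety. *)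

theory Defs
  imports Main "HOL.Vector_Spaces"
begin

definition bilinear_product ::
  "('k::field \<Rightarrow> 'v::ab_group_add \<Rightarrow> 'v) \<Rightarrow> ('v \<Rightarrow> 'v \<Rightarrow> 'v) \<Rightarrow> bool" where
  "bilinear_product scale mult \<longleftrightarrow>
     (\<forall>x y z. mult (x + y) z = mult x z + mult y z) \<and>
     (\<forall>x y z. mult x (y + z) = mult x y + mult x z) \<and>
     (\<forall>c x y. mult (scale c x) y = scale c (mult x y)) \<and>
     (\<forall>c x y. mult x (scale c y) = scale c (mult x y))"

definition assoc_of :: "('v::ab_group_add \<Rightarrow> 'v \<Rightarrow> 'v) \<Rightarrow> 'v \<Rightarrow> 'v \<Rightarrow> 'v \<Rightarrow> 'v" where
  "assoc_of mult a b c = mult (mult a b) c - mult a (mult b c)"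

definition left_symmetric :: "('v::ab_group_add \<Rightarrow> 'v \<Rightarrow> 'v) \<Rightarrow> bool" where
  "left_symmetric mult \<longleftrightarrow> (\<forall>a b c. assoc_of mult a b c = assoc_of mult b a c)"

definition commutator :: "('v::ab_group_add \<Rightarrow> 'v \<Rightarrow> 'v) \<Rightarrow> 'v \<Rightarrow> 'v \<Rightarrow> 'v" where
  "commutator mult a b = mult a b - mult b a"

definition anticommutator :: "('v::ab_group_add \<Rightarrow> 'v \<Rightarrow> 'v) \<Rightarrow> 'v \<Rightarrow> 'v \<Rightarrow> 'v" where
  "anticommutator mult a b = mult a b + mult b a"

end

theory Submission
  imports Defs
begin

text \<open>Both sides are equivalent to the vanishing of two families of trilinear expressions:
  on the left the left-symmetry defect \<open>(a,b,c) - (b,a,c)\<close> and the symmetrised sum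
  \<open>\<Sum>\<^sub>\<sigma> x\<^sub>\<sigma>\<^sub>1(x\<^sub>\<sigma>\<^sub>2 x\<^sub>\<sigma>\<^sub>3)\<close>, on the right the defects of the three bracket identities.
  Expanding brackets, each right-hand defect is an integer combination of permuted
  left-hand ones, and conversely four times the left-symmetry defect and twice the
  symmetrised sum are integer combinations of permuted right-hand defects.  Since the
  ground field has characteristic 0, these factors and the denominators 3 are harmless.\<close>

locale biadditive =
  fixes mult :: "'v::ab_group_add \<Rightarrow> 'v \<Rightarrow> 'v"
  assumes add_left: "mult (x + y) z = mult x z + mult y z"
    and add_right: "mult x (y + z) = mult x y + mult x z"
begin

lemma diff_left: "mult (x - y) z = mult x z - mult y z"
  using add_left[of "x - y" y z] by (simp add: algebra_simps)

lemma diff_right: "mult x (y - z) = mult x y - mult x z"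
  using add_right[of x "y - z" z] by (simp add: algebra_simps)

lemma minus_left: "mult (- x) z = - mult x z"
  using diff_left[of 0 x z] diff_left[of 0 0 z] by simp

lemma minus_right: "mult x (- z) = - mult x z"
  using diff_right[of x 0 z] diff_right[of x 0 0] by simp

lemmas distribs = add_left add_right diff_left diff_right minus_left minus_right

end

lemma bilinear_product_imp_biadditive:
  "bilinear_product scale mult \<Longrightarrow> biadditive mult"
  unfolding bilinear_product_def by unfold_locales blast+

definition left_symmetry_defect :: "('v::ab_group_add \<Rightarrow> 'v \<Rightarrow> 'v) \<Rightarrow> 'v \<Rightarrow> 'v \<Rightarrow> 'v \<Rightarrow> 'v"
  where "left_symmetry_defect mult a b c = assoc_of mult a b c - assoc_of mult b a c"

definition right_nested_symsum :: "('v::ab_group_add \<Rightarrow> 'v \<Rightarrow> 'v) \<Rightarrow> 'v \<Rightarrow> 'v \<Rightarrow> 'v \<Rightarrow> 'v"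
  where "right_nested_symsum mult a b c =
    mult a (mult b c) + mult b (mult a c) + mult a (mult c b)
    + mult c (mult a b) + mult b (mult c a) + mult c (mult b a)"

definition jacobi_defect :: "('v::ab_group_add \<Rightarrow> 'v \<Rightarrow> 'v) \<Rightarrow> 'v \<Rightarrow> 'v \<Rightarrow> 'v \<Rightarrow> 'v"
  where "jacobi_defect mult a b c =
    (let L = commutator mult in L (L a b) c + L (L b c) a + L (L c a) b)"

definition anticomm_left_defect :: "('v::ab_group_add \<Rightarrow> 'v \<Rightarrow> 'v) \<Rightarrow> 'v \<Rightarrow> 'v \<Rightarrow> 'v \<Rightarrow> 'v"
  where "anticomm_left_defect mult a b c =
    (let L = commutator mult; J = anticommutator mult in
      J (J a b) c -
      (- J (L a b) c - (J (L a c) b + J (L a c) b) + L (J a b) c - L (L a c) b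
       + J a (J b c) - J a (L b c) + L a (J b c)))"

text \<open>Three times the defect of the identity for \<open>{a,{b,c}}\<close>, which clears its denominators.\<close>

definition anticomm_right_defect :: "('v::ab_group_add \<Rightarrow> 'v \<Rightarrow> 'v) \<Rightarrow> 'v \<Rightarrow> 'v \<Rightarrow> 'v \<Rightarrow> 'v"
  where "anticomm_right_defect mult a b c =
    (let L = commutator mult; J = anticommutator mult;
         p = J (L a b) c + J (L a c) b + L (J b c) a in
      (J a (J b c) + J a (J b c) + J a (J b c))
      - (p + p + p + L (L a c) b + L (L a c) b + L a (L b c)))"

context biadditive
begin

lemmas defect_defs = left_symmetry_defect_def right_nested_symsum_def jacobi_defect_def
  anticomm_left_defect_def anticomm_right_defect_def assoc_of_def
  commutator_def anticommutator_def Let_def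

lemma jacobi_defect_eq:
  "jacobi_defect mult a b c =
    left_symmetry_defect mult a b c - left_symmetry_defect mult a c b
    + left_symmetry_defect mult b c a"
  unfolding defect_defs by (simp add: distribs algebra_simps)

lemma anticomm_left_defect_eq:
  "anticomm_left_defect mult a b c =
    left_symmetry_defect mult a b c + left_symmetry_defect mult a c b
    + left_symmetry_defect mult a c b + left_symmetry_defect mult a c b
    + left_symmetry_defect mult b c a"
  unfolding defect_defs by (simp add: distribs algebra_simps)

lemma anticomm_right_defect_eq:
  "anticomm_right_defect mult a b c =
    - (left_symmetry_defect mult a b c + left_symmetry_defect mult a b c
       + left_symmetry_defect mult a b c)
    - (left_symmetry_defect mult a c b + left_symmetry_defect mult a c b
       + left_symmetry_defect mult a c b + left_symmetry_defect mult a c b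
       + left_symmetry_defect mult a c b)
    + left_symmetry_defect mult b c a
    + right_nested_symsum mult a b c + right_nested_symsum mult a b c"
  unfolding defect_defs by (simp add: distribs algebra_simps)

lemma four_left_symmetry_defect_eq:
  "left_symmetry_defect mult a b c + left_symmetry_defect mult a b c
   + left_symmetry_defect mult a b c + left_symmetry_defect mult a b c =
    jacobi_defect mult a b c + anticomm_left_defect mult a c b"
  unfolding defect_defs by (simp add: distribs algebra_simps)

lemma two_right_nested_symsum_eq:
  "right_nested_symsum mult a b c + right_nested_symsum mult a b c =
    - jacobi_defect mult a b c + anticomm_left_defect mult a b c
    + anticomm_left_defect mult a c b + anticomm_right_defect mult a b c"
  unfolding defect_defs by (simp add: distribs algebra_simps)

lemma left_symmetric_polarization_iff:
  assumes no_2_torsion: "\<And>x::'v. x + x = 0 \<Longrightarrow> x = 0"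
  shows "(left_symmetric mult \<and> (\<forall>a b c. right_nested_symsum mult a b c = 0)) \<longleftrightarrow>
    (\<forall>a b c. jacobi_defect mult a b c = 0) \<and>
    (\<forall>a b c. anticomm_left_defect mult a b c = 0) \<and>
    (\<forall>a b c. anticomm_right_defect mult a b c = 0)"
proof -
  have left_symmetric_iff: "left_symmetric mult \<longleftrightarrow> (\<forall>a b c. left_symmetry_defect mult a b c = 0)"
    unfolding left_symmetric_def left_symmetry_defect_def by simp
  have no_4_torsion: "x + x + x + x = 0 \<Longrightarrow> x = 0" for x :: 'v
    using no_2_torsion[of "x + x"] no_2_torsion[of x] by (simp add: add.assoc)
  show ?thesis
    unfolding left_symmetric_iff
  proof
    assume "(\<forall>a b c. left_symmetry_defect mult a b c = 0) \<and>
      (\<forall>a b c. right_nested_symsum mult a b c = 0)"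
    then show "(\<forall>a b c. jacobi_defect mult a b c = 0) \<and>
      (\<forall>a b c. anticomm_left_defect mult a b c = 0) \<and>
      (\<forall>a b c. anticomm_right_defect mult a b c = 0)"
      by (simp add: jacobi_defect_eq anticomm_left_defect_eq anticomm_right_defect_eq)
  next
    assume polar: "(\<forall>a b c. jacobi_defect mult a b c = 0) \<and>
      (\<forall>a b c. anticomm_left_defect mult a b c = 0) \<and>
      (\<forall>a b c. anticomm_right_defect mult a b c = 0)"
    have "left_symmetry_defect mult a b c = 0" for a b c
      by (rule no_4_torsion) (simp add: four_left_symmetry_defect_eq polar)
    moreover have "right_nested_symsum mult a b c = 0" for a b c
      by (rule no_2_torsion) (simp add: two_right_nested_symsum_eq polar)
    ultimately show "(\<forall>a b c. left_symmetry_defect mult a b c = 0) \<and>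
      (\<forall>a b c. right_nested_symsum mult a b c = 0)"
      by simp
  qed
qed

end

lemma (in vector_space) scale_two: "scale 2 x = x + x"
  using scale_left_distrib[of 1 1 x] by simp

lemma (in vector_space) scale_three: "scale 3 x = x + x + x"
  using scale_left_distrib[of 2 1 x] by (simp add: scale_two)

lemma vector_space_char_0_double_eq_0:
  fixes scale :: "'k::field_char_0 \<Rightarrow> 'v::ab_group_add \<Rightarrow> 'v" and x :: 'v
  assumes "vector_space scale" and "x + x = 0"
  shows "x = 0"
proof -
  interpret vector_space scale by fact
  show ?thesis
    using assms(2) by (metis scale_two scale_eq_0_iff zero_neq_numeral)
qed

lemma eq_plus_two_thirds_one_third_iff:
  fixes scale :: "'k::field_char_0 \<Rightarrow> 'v::ab_group_add \<Rightarrow> 'v"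
  assumes "vector_space scale"
  shows "x = p + scale (2/3) q + scale (1/3) r \<longleftrightarrow> x + x + x = p + p + p + q + q + r"
proof -
  interpret vector_space scale by fact
  have "x = p + scale (2/3) q + scale (1/3) r \<longleftrightarrow>
      scale 3 x = scale 3 (p + scale (2/3) q + scale (1/3) r)"
    by simp
  also have "scale 3 (p + scale (2/3) q + scale (1/3) r) = scale 3 p + scale 2 q + r"
    by (simp add: scale_right_distrib)
  finally show ?thesis
    by (simp add: scale_two scale_three add.assoc)
qed

theorem mainTheorem15:
  fixes scale :: "'k::field_char_0 \<Rightarrow> 'v::ab_group_add \<Rightarrow> 'v"
    and mult :: "'v \<Rightarrow> 'v \<Rightarrow> 'v"
  assumes "vector_space scale"
    and "bilinear_product scale mult"
  defines "L \<equiv> commutator mult" and "J \<equiv> anticommutator mult"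
  shows "(left_symmetric mult \<and>
          (\<forall>a b c. mult a (mult b c) + mult b (mult a c) + mult a (mult c b)
                  + mult c (mult a b) + mult b (mult c a) + mult c (mult b a) = 0))
     \<longleftrightarrow>
         ((\<forall>a b c. L (L a b) c + L (L b c) a + L (L c a) b = 0) \<and>
          (\<forall>a b c. J (J a b) c =
              - J (L a b) c - scale 2 (J (L a c) b) + L (J a b) c - L (L a c) b
              + J a (J b c) - J a (L b c) + L a (J b c)) \<and>
          (\<forall>a b c. J a (J b c) =
              J (L a b) c + J (L a c) b + L (J b c) a
              + scale (2/3) (L (L a c) b) + scale (1/3) (L a (L b c))))"
proof -
  interpret vector_space scale by fact
  interpret biadditive mult using assms(2) by (rule bilinear_product_imp_biadditive)
  have no_2_torsion: "x + x = 0 \<Longrightarrow> x = 0" for x :: 'v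
    using assms(1) by (rule vector_space_char_0_double_eq_0)
  have jacobi_iff: "(\<forall>a b c. L (L a b) c + L (L b c) a + L (L c a) b = 0) \<longleftrightarrow>
      (\<forall>a b c. jacobi_defect mult a b c = 0)"
    unfolding jacobi_defect_def L_def Let_def ..
  have anticomm_left_iff: "(\<forall>a b c. J (J a b) c =
        - J (L a b) c - scale 2 (J (L a c) b) + L (J a b) c - L (L a c) b
        + J a (J b c) - J a (L b c) + L a (J b c)) \<longleftrightarrow>
      (\<forall>a b c. anticomm_left_defect mult a b c = 0)"
    unfolding anticomm_left_defect_def L_def J_def Let_def scale_two by simp
  have anticomm_right_iff: "(\<forall>a b c. J a (J b c) =
        J (L a b) c + J (L a c) b + L (J b c) a
        + scale (2/3) (L (L a c) b) + scale (1/3) (L a (L b c))) \<longleftrightarrow>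
      (\<forall>a b c. anticomm_right_defect mult a b c = 0)"
    unfolding anticomm_right_defect_def L_def J_def Let_def
      eq_plus_two_thirds_one_third_iff[OF assms(1)]
    by simp
  show ?thesis
    unfolding jacobi_iff anticomm_left_iff anticomm_right_iff
    using left_symmetric_polarization_iff[OF no_2_torsion]
    by (simp only: right_nested_symsum_def)
qed

end
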